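(* Let $Q$ be a finite-dimensional real affine space modelled on $V$ (with a norm $\|\cdot\|$ on $V$), $q\in Q$, $n\ge0$, and suppose $f\in A(Q)$ can be written as $$f=\sum_{m=0}^nk^m+r,$$ where each $k^m$ is a homogeneous polynomial of degree $m$ at $q$ and $r$ is a remainder of order $n$ at $q$. Then for $0\le j\le n$ and every $v\in V$, $$k^j(q+v)=\frac1{j!}\mathrm D^jf(q;v).$$
   Context: $k:Q\to\mathbb R$ is a homogeneous polynomial of degree $m$ at $q$ if there is $F:Q\times V^m\to\mathbb R$, linear in each vector argument at the fixed point $q$, with $k(q+v)=\frac1{m!}F(q;v,\dots,v)$ for all $v\in V$. $r$ is a remainder of order $n$ at $q$ if $r(q)=0$ and $\lim_{v\to0}r(q+v)/\|v\|^n=0$. The $j$-th directional derivative is $\mathrm D^jf(q;v)=\lim_{s\to0}s^{-j}\Delta^jf(q;sv)$ with $\Delta^jf(q;w)=(-1)^j\sum_{l=0}^j(-1)^l\binom jl f(q+lw)$. *)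

theory Defs
  imports "HOL-Analysis.Analysis"
begin

text \<open>The affine space Q is modelled by its (finite-dimensional) model space V itself,
  a point q plus a vector v being q + v.\<close>

definition multilinear_on_lists :: "nat \<Rightarrow> ('a::real_vector list \<Rightarrow> real) \<Rightarrow> bool" where
  "multilinear_on_lists m F \<longleftrightarrow>
     (\<forall>xs ys. length xs + length ys + 1 = m \<longrightarrow> linear (\<lambda>x. F (xs @ x # ys)))"

definition homogeneous_poly_at :: "nat \<Rightarrow> 'a::real_vector \<Rightarrow> ('a \<Rightarrow> real) \<Rightarrow> bool" where
  "homogeneous_poly_at m q k \<longleftrightarrow>
     (\<exists>F. multilinear_on_lists m F \<and> (\<forall>v. k (q + v) = F (replicate m v) / fact m))"

definition remainder_at :: "nat \<Rightarrow> 'a::real_normed_vector \<Rightarrow> ('a \<Rightarrow> real) \<Rightarrow> bool" where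
  "remainder_at n q r \<longleftrightarrow> r q = 0 \<and> ((\<lambda>v. r (q + v) / norm v ^ n) \<longlongrightarrow> 0) (at 0)"

definition fin_diff :: "nat \<Rightarrow> ('a::real_vector \<Rightarrow> real) \<Rightarrow> 'a \<Rightarrow> 'a \<Rightarrow> real" where
  "fin_diff j f q w = (-1) ^ j * (\<Sum>l=0..j. (-1) ^ l * real (j choose l) * f (q + real l *\<^sub>R w))"

definition dir_deriv_exists :: "nat \<Rightarrow> ('a::real_vector \<Rightarrow> real) \<Rightarrow> 'a \<Rightarrow> 'a \<Rightarrow> bool" where
  "dir_deriv_exists j f q v \<longleftrightarrow> (\<exists>L. ((\<lambda>s::real. fin_diff j f q (s *\<^sub>R v) / s ^ j) \<longlongrightarrow> L) (at 0))"

definition dir_deriv :: "nat \<Rightarrow> ('a::real_vector \<Rightarrow> real) \<Rightarrow> 'a \<Rightarrow> 'a \<Rightarrow> real" where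
  "dir_deriv j f q v = Lim (at (0::real)) (\<lambda>s. fin_diff j f q (s *\<^sub>R v) / s ^ j)"

end

theory Submission
  imports Defs
begin

text \<open>The difference quotient Delta^j f(q; s v) / s^j is linear in f. On a homogeneous
  polynomial k of degree m it equals (-1)^j A(j,m) s^(m-j) k(q + v), where
  A(j,m) = \<Sum>l\<le>j. (-1)^l (j choose l) l^m vanishes for m < j and equals (-1)^j j! for m = j;
  so as s \<rightarrow> 0 it tends to j! k(q + v) if m = j and to 0 otherwise. On a remainder of
  order n \<ge> j every term of Delta^j r(q; s v) is o(|s|^n), so the quotient tends to 0.\<close>

definition alternating_binomial_moment :: "nat \<Rightarrow> nat \<Rightarrow> real" where
  "alternating_binomial_moment j m = (\<Sum>l\<le>j. (-1) ^ l * real (j choose l) * real l ^ m)"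

lemma alternating_binomial_moment_Suc:
  "alternating_binomial_moment (Suc j) (Suc m) =
     - real (Suc j) * (\<Sum>t\<le>m. real (m choose t) * alternating_binomial_moment j t)"
proof -
  have choose_Suc: "real (Suc j choose Suc i) * real (Suc i) = real (Suc j) * real (j choose i)" for i
    by (metis Suc_times_binomial_eq mult.commute of_nat_mult)
  have Suc_power: "real (Suc i) ^ m = (\<Sum>t\<le>m. real (m choose t) * real i ^ t)" for i
    using binomial_ring[of "real i" 1 m] by (simp add: add.commute)
  have "alternating_binomial_moment (Suc j) (Suc m) =
      (\<Sum>i\<le>j. (-1) ^ Suc i * (real (Suc j choose Suc i) * real (Suc i)) * real (Suc i) ^ m)"
    unfolding alternating_binomial_moment_def
    by (subst sum.atMost_Suc_shift) (simp add: mult_ac)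
  also have "\<dots> = - real (Suc j) * (\<Sum>i\<le>j. (-1) ^ i * real (j choose i) * real (Suc i) ^ m)"
    unfolding choose_Suc sum_distrib_left by (intro sum.cong refl) (simp del: of_nat_Suc)
  also have "\<dots> = - real (Suc j) *
      (\<Sum>i\<le>j. (-1) ^ i * real (j choose i) * (\<Sum>t\<le>m. real (m choose t) * real i ^ t))"
    by (simp only: Suc_power)
  also have "\<dots> = - real (Suc j) * (\<Sum>t\<le>m. real (m choose t) * alternating_binomial_moment j t)"
    unfolding alternating_binomial_moment_def sum_distrib_left
    by (subst sum.swap) (simp add: mult_ac)
  finally show ?thesis .
qed

lemma alternating_binomial_moment_less:
  "m < j \<Longrightarrow> alternating_binomial_moment j m = 0"
proof (induction j arbitrary: m)
  case 0
  then show ?case by simp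
next
  case (Suc j)
  show ?case
  proof (cases m)
    case 0
    then show ?thesis
      using choose_alternating_sum[of "Suc j", where 'a = real]
      by (simp add: alternating_binomial_moment_def)
  next
    case (Suc m')
    with Suc.prems Suc.IH show ?thesis
      by (simp add: alternating_binomial_moment_Suc)
  qed
qed

lemma alternating_binomial_moment_diag:
  "alternating_binomial_moment j j = (-1) ^ j * fact j"
proof (induction j)
  case 0
  then show ?case by (simp add: alternating_binomial_moment_def)
next
  case (Suc j)
  have "(\<Sum>t\<le>j. real (j choose t) * alternating_binomial_moment j t) = alternating_binomial_moment j j"
    by (subst sum.remove[of _ j]) (auto intro!: sum.neutral simp: alternating_binomial_moment_less)
  then show ?case
    by (simp add: alternating_binomial_moment_Suc Suc.IH algebra_simps)
qed

lemma multilinear_on_lists_scaleR_prefix: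
  assumes "multilinear_on_lists m F" and "i \<le> m"
  shows "F (replicate i (s *\<^sub>R v) @ replicate (m - i) v) = s ^ i * F (replicate m v)"
  using \<open>i \<le> m\<close>
proof (induction i)
  case 0
  then show ?case by simp
next
  case (Suc i)
  have "linear (\<lambda>x. F (replicate i (s *\<^sub>R v) @ x # replicate (m - Suc i) v))"
    using assms(1) Suc.prems unfolding multilinear_on_lists_def by simp
  then have "F (replicate i (s *\<^sub>R v) @ (s *\<^sub>R v) # replicate (m - Suc i) v)
      = s * F (replicate i (s *\<^sub>R v) @ v # replicate (m - Suc i) v)"
    using linear_scale by fastforce
  moreover have "v # replicate (m - Suc i) v = replicate (m - i) v"
    using Suc.prems by (simp add: Suc_diff_Suc[symmetric])
  ultimately show ?case
    using Suc by (simp flip: replicate_append_same)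
qed

lemma homogeneous_poly_at_scaleR:
  assumes "homogeneous_poly_at m q k"
  shows "k (q + s *\<^sub>R v) = s ^ m * k (q + v)"
proof -
  obtain F where "multilinear_on_lists m F" and "\<And>v. k (q + v) = F (replicate m v) / fact m"
    using assms unfolding homogeneous_poly_at_def by blast
  then show ?thesis
    using multilinear_on_lists_scaleR_prefix[of m F m s v] by simp
qed

lemma fin_diff_scaleR:
  "fin_diff j f q (s *\<^sub>R v) =
     (-1) ^ j * (\<Sum>l\<le>j. (-1) ^ l * real (j choose l) * f (q + (real l * s) *\<^sub>R v))"
  by (simp add: fin_diff_def atLeast0AtMost)

lemma fin_diff_add:
  "fin_diff j (\<lambda>x. f x + g x) q w = fin_diff j f q w + fin_diff j g q w"
  by (simp add: fin_diff_def sum.distrib algebra_simps)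

lemma fin_diff_sum:
  "fin_diff j (\<lambda>x. \<Sum>i\<in>I. g i x) q w = (\<Sum>i\<in>I. fin_diff j (g i) q w)"
  unfolding fin_diff_def sum_distrib_left by (subst sum.swap) (simp add: mult_ac)

lemma homogeneous_poly_at_fin_diff:
  assumes "homogeneous_poly_at m q k"
  shows "fin_diff j k q (s *\<^sub>R v) = (-1) ^ j * alternating_binomial_moment j m * s ^ m * k (q + v)"
  unfolding fin_diff_scaleR homogeneous_poly_at_scaleR[OF assms] alternating_binomial_moment_def
  by (simp add: sum_distrib_left sum_distrib_right power_mult_distrib mult_ac)

lemma homogeneous_poly_at_fin_diff_quotient_tendsto:
  assumes "homogeneous_poly_at m q k"
  shows "((\<lambda>s. fin_diff j k q (s *\<^sub>R v) / s ^ j) \<longlongrightarrow> (if m = j then fact j * k (q + v) else 0)) (at 0)"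
proof (cases "m < j")
  case True
  then show ?thesis
    by (simp add: homogeneous_poly_at_fin_diff[OF assms] alternating_binomial_moment_less)
next
  case False
  let ?c = "(-1) ^ j * alternating_binomial_moment j m * k (q + v)"
  have "?c * s ^ (m - j) = fin_diff j k q (s *\<^sub>R v) / s ^ j" if "s \<noteq> 0" for s
  proof -
    have "s ^ m = s ^ (m - j) * s ^ j"
      using False by (simp flip: power_add)
    then show ?thesis
      using that by (simp add: homogeneous_poly_at_fin_diff[OF assms])
  qed
  then have eq: "\<forall>\<^sub>F s in at 0. ?c * s ^ (m - j) = fin_diff j k q (s *\<^sub>R v) / s ^ j"
    by (simp add: eventually_at_filter)
  have "?c * 0 ^ (m - j) = (if m = j then fact j * k (q + v) else 0)"
    using False by (simp add: alternating_binomial_moment_diag flip: power_add)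
  moreover have "((\<lambda>s. ?c * s ^ (m - j)) \<longlongrightarrow> ?c * 0 ^ (m - j)) (at 0)"
    by (intro tendsto_intros)
  ultimately show ?thesis
    using Lim_transform_eventually[OF _ eq] by simp
qed

lemma remainder_at_tendsto_div_power:
  assumes rem: "remainder_at n q r" and "j \<le> n"
  shows "((\<lambda>s. r (q + s *\<^sub>R w) / s ^ j) \<longlongrightarrow> 0) (at 0)"
proof (cases "w = 0")
  case True
  then show ?thesis
    using rem by (simp add: remainder_at_def)
next
  case False
  define H where "H x = r (q + x) / norm x ^ n" for x
  have "filterlim (\<lambda>s. s *\<^sub>R w) (at 0) (at 0)"
    using False by (intro filterlim_atI tendsto_eq_intros) (auto simp: eventually_at_filter)
  moreover have "(H \<longlongrightarrow> 0) (at 0)"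
    using rem unfolding remainder_at_def H_def by simp
  ultimately have "((\<lambda>s. H (s *\<^sub>R w)) \<longlongrightarrow> 0) (at 0)"
    by (rule filterlim_compose[rotated])
  then show ?thesis
  proof (rule tendsto_0_le[where K = "norm w ^ n"])
    have "\<bar>r (q + s *\<^sub>R w) / s ^ j\<bar> \<le> \<bar>H (s *\<^sub>R w)\<bar> * norm w ^ n"
      if "s \<noteq> 0" "\<bar>s\<bar> < 1" for s
    proof -
      have "\<bar>s\<bar> ^ n \<le> \<bar>s\<bar> ^ j"
        using that \<open>j \<le> n\<close> by (intro power_decreasing) auto
      then have "\<bar>r (q + s *\<^sub>R w)\<bar> / \<bar>s\<bar> ^ j \<le> \<bar>r (q + s *\<^sub>R w)\<bar> / \<bar>s\<bar> ^ n"
        using that by (intro divide_left_mono) auto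
      then show ?thesis
        using False that by (simp add: H_def power_abs power_mult_distrib)
    qed
    then show "\<forall>\<^sub>F s in at 0. norm (r (q + s *\<^sub>R w) / s ^ j) \<le> norm (H (s *\<^sub>R w)) * norm w ^ n"
      unfolding eventually_at by (intro exI[of _ 1]) auto
  qed
qed

lemma remainder_at_fin_diff_quotient_tendsto:
  assumes "remainder_at n q r" and "j \<le> n"
  shows "((\<lambda>s. fin_diff j r q (s *\<^sub>R v) / s ^ j) \<longlongrightarrow> 0) (at 0)"
proof -
  have "fin_diff j r q (s *\<^sub>R v) / s ^ j =
      (-1) ^ j * (\<Sum>l\<le>j. (-1) ^ l * real (j choose l) * (r (q + s *\<^sub>R (real l *\<^sub>R v)) / s ^ j))" for s
    by (simp add: fin_diff_scaleR sum_divide_distrib mult.commute[of s] flip: times_divide_eq_right)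
  moreover have "((\<lambda>s. (-1) ^ j * (\<Sum>l\<le>j. (-1) ^ l * real (j choose l) * (r (q + s *\<^sub>R (real l *\<^sub>R v)) / s ^ j)))
      \<longlongrightarrow> (-1) ^ j * (\<Sum>l\<le>j. (-1) ^ l * real (j choose l) * 0)) (at 0)"
    by (intro tendsto_intros remainder_at_tendsto_div_power[OF assms])
  ultimately show ?thesis
    by simp
qed

lemma dir_deriv_eqI:
  assumes "((\<lambda>s. fin_diff j f q (s *\<^sub>R v) / s ^ j) \<longlongrightarrow> L) (at 0)"
  shows "dir_deriv_exists j f q v" and "dir_deriv j f q v = L"
  using assms tendsto_Lim[OF trivial_limit_at assms]
  unfolding dir_deriv_exists_def dir_deriv_def by blast+

theorem proposition14:
  fixes f r :: "'a::euclidean_space \<Rightarrow> real"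
    and k :: "nat \<Rightarrow> 'a \<Rightarrow> real"
    and q :: 'a and n :: nat
  assumes hom: "\<And>m. m \<le> n \<Longrightarrow> homogeneous_poly_at m q (k m)"
    and rem: "remainder_at n q r"
    and dec: "\<And>x. f x = (\<Sum>m\<le>n. k m x) + r x"
  shows "\<forall>j\<le>n. \<forall>v. dir_deriv_exists j f q v \<and> k j (q + v) = dir_deriv j f q v / fact j"
proof (intro allI impI)
  fix j v
  assume "j \<le> n"
  have "f = (\<lambda>x. (\<Sum>m\<le>n. k m x) + r x)"
    using dec by blast
  then have quotient: "fin_diff j f q (s *\<^sub>R v) / s ^ j =
      (\<Sum>m\<le>n. fin_diff j (k m) q (s *\<^sub>R v) / s ^ j) + fin_diff j r q (s *\<^sub>R v) / s ^ j" for s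
    by (simp add: fin_diff_add fin_diff_sum add_divide_distrib sum_divide_distrib)
  have "((\<lambda>s. fin_diff j f q (s *\<^sub>R v) / s ^ j)
      \<longlongrightarrow> (\<Sum>m\<le>n. if m = j then fact j * k m (q + v) else 0) + 0) (at 0)"
    unfolding quotient
    by (intro tendsto_add tendsto_sum homogeneous_poly_at_fin_diff_quotient_tendsto hom
        remainder_at_fin_diff_quotient_tendsto[OF rem \<open>j \<le> n\<close>]) simp
  moreover have "(\<Sum>m\<le>n. if m = j then fact j * k m (q + v) else 0) + 0 = fact j * k j (q + v)"
    using \<open>j \<le> n\<close> by simp
  ultimately show "dir_deriv_exists j f q v \<and> k j (q + v) = dir_deriv j f q v / fact j"
    using dir_deriv_eqI by fastforce
qed

end
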